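(* For each integer $k\ge 2$ there exists a complete tripartite graph that is uniquely $k$-list colorable. (For instance, $K_{N,N,N}$ with $N=(k-1)\binom{2k-2}{k-1}$ is such a graph.)
   Context: All graphs are finite, simple and undirected. A list assignment $L$ for a graph $G$ assigns to each vertex $v$ a set $L(v)$ of colors; an $L$-coloring is a proper vertex coloring $c$ of $G$ with $c(v)\in L(v)$ for every vertex $v$. A $k$-list assignment is a list assignment with $|L(v)|=k$ for all $v$. $G$ is uniquely $k$-list colorable (U$k$LC) if there exists a $k$-list assignment $L$ such that $G$ has exactly one $L$-coloring. $K_{n_1,\dots,n_r}$ denotes the complete $r$-partite graph with parts of sizes $n_1,\dots,n_r$. *)

theory Defs
  imports Main
begin

text \<open>A finite simple graph is given by a vertex set V and a symmetric irreflexive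
adjacency relation E.\<close>

definition is_L_coloring ::
  "'v set \<Rightarrow> ('v \<Rightarrow> 'v \<Rightarrow> bool) \<Rightarrow> ('v \<Rightarrow> 'c set) \<Rightarrow> ('v \<Rightarrow> 'c) \<Rightarrow> bool" where
  "is_L_coloring V E L c \<longleftrightarrow>
     (\<forall>v\<in>V. c v \<in> L v) \<and> (\<forall>u\<in>V. \<forall>v\<in>V. E u v \<longrightarrow> c u \<noteq> c v)"

definition is_k_list_assignment :: "'v set \<Rightarrow> nat \<Rightarrow> ('v \<Rightarrow> 'c set) \<Rightarrow> bool" where
  "is_k_list_assignment V k L \<longleftrightarrow> (\<forall>v\<in>V. finite (L v) \<and> card (L v) = k)"

definition uniquely_k_list_colorable ::
  "'v set \<Rightarrow> ('v \<Rightarrow> 'v \<Rightarrow> bool) \<Rightarrow> nat \<Rightarrow> bool" where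
  "uniquely_k_list_colorable V E k \<longleftrightarrow>
     (\<exists>L :: 'v \<Rightarrow> nat set. is_k_list_assignment V k L \<and>
        (\<exists>c. is_L_coloring V E L c \<and>
             (\<forall>c'. is_L_coloring V E L c' \<longrightarrow> (\<forall>v\<in>V. c' v = c v))))"

text \<open>Complete multipartite graph K_{n_1,...,n_r}: vertices (i,j) with i < r, j < n_i;
two vertices are adjacent iff they lie in different parts.\<close>
definition cmp_vertices :: "nat list \<Rightarrow> (nat \<times> nat) set" where
  "cmp_vertices ns = {(i, j). i < length ns \<and> j < ns ! i}"

definition cmp_edge :: "nat \<times> nat \<Rightarrow> nat \<times> nat \<Rightarrow> bool" where
  "cmp_edge u v \<longleftrightarrow> fst u \<noteq> fst v"

end

(*
  Let m = k - 1 and split the colors {..<3m} into blocks C_0, C_1, C_2 of size m. Part i gets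
  one vertex with list {c} \<union> S for every c in C_i and every m-set S of colors outside C_i;
  giving each such vertex its color c is a proper coloring. In any proper coloring the sets D_i
  of colors used on the parts are disjoint. If D_i misses some c in C_i and has at most m colors,
  some m-set S avoids both C_i and D_i, because 2m colors lie outside C_i, and the vertex with list
  {c} \<union> S cannot be colored. So each D_i contains C_i or has more than m colors, and as only 3m
  colors are available, C_i \<subseteq> D_i for all i. A color of S lies in some C_l \<subseteq> D_l with
  l \<noteq> i, hence cannot be used on part i, and every vertex is forced to take its color c.
  The same argument works for any number r \<ge> 3 of parts.
*)
theory Submission
  imports Defs "HOL-Library.Disjoint_Sets"
begin

definition color_block :: "nat \<Rightarrow> nat \<Rightarrow> nat set" where
  "color_block m i = {i * m..<Suc i * m}"

lemma card_color_block [simp]: "card (color_block m i) = m"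
  by (simp add: color_block_def)

lemma finite_color_block [simp]: "finite (color_block m i)"
  by (simp add: color_block_def)

lemma color_block_iff_div: "0 < m \<Longrightarrow> x \<in> color_block m i \<longleftrightarrow> x div m = i"
  by (auto simp: color_block_def div_nat_eqI dividend_less_times_div mult.commute)

lemma color_block_subset:
  assumes "i < r"
  shows "color_block m i \<subseteq> {..<r * m}"
proof -
  have "Suc i * m \<le> r * m"
    using assms by (intro mult_le_mono1) simp
  then show ?thesis
    by (auto simp: color_block_def)
qed

lemma disjoint_family_color_block: "disjoint_family (color_block m)"
  by (cases "m = 0") (auto simp: disjoint_family_on_def color_block_iff_div, simp add: color_block_def)

lemma card_compl_color_block: "i < r \<Longrightarrow> card ({..<r * m} - color_block m i) = (r - 1) * m"
  by (simp add: card_Diff_subset color_block_subset diff_mult_distrib)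

text \<open>A pair \<open>(c, S)\<close> encodes the list \<open>insert c S\<close>; \<open>c\<close> is the color that a vertex
  of part \<open>i\<close> with this list receives in the unique coloring.\<close>
definition pointed_lists :: "nat \<Rightarrow> nat \<Rightarrow> nat \<Rightarrow> (nat \<times> nat set) set" where
  "pointed_lists r m i =
     {(c, S). c \<in> color_block m i \<and> S \<subseteq> {..<r * m} - color_block m i \<and> card S = m}"

lemma finite_pointed_lists: "finite (pointed_lists r m i)"
proof (rule finite_subset)
  show "pointed_lists r m i \<subseteq> color_block m i \<times> Pow {..<r * m}"
    by (auto simp: pointed_lists_def)
qed simp

lemma pointed_lists_nonempty:
  assumes "0 < m" "2 \<le> r" "i < r"
  shows "pointed_lists r m i \<noteq> {}"
proof -
  have "m \<le> card ({..<r * m} - color_block m i)"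
    using assms by (simp add: card_compl_color_block)
  then obtain S where "S \<subseteq> {..<r * m} - color_block m i" "card S = m"
    by (rule obtain_subset_with_card_n)
  moreover have "i * m \<in> color_block m i"
    using assms by (simp add: color_block_def)
  ultimately have "(i * m, S) \<in> pointed_lists r m i"
    by (simp add: pointed_lists_def)
  then show ?thesis
    by blast
qed

lemma card_pointed_list:
  assumes "(c, S) \<in> pointed_lists r m i"
  shows "card (insert c S) = Suc m"
proof -
  have "finite S" "c \<notin> S" "card S = m"
    using assms by (auto simp: pointed_lists_def intro: finite_subset)
  then show ?thesis
    by simp
qed

lemma pointed_lists_hitting_set:
  assumes "3 \<le> r" "i < r" "finite D"
    and hit: "\<And>c S. (c, S) \<in> pointed_lists r m i \<Longrightarrow> insert c S \<inter> D \<noteq> {}"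
  shows "color_block m i \<subseteq> D \<or> m < card D"
proof (rule ccontr)
  assume "\<not> (color_block m i \<subseteq> D \<or> m < card D)"
  then obtain c where c: "c \<in> color_block m i" "c \<notin> D" and small: "card D \<le> m"
    by auto
  have "card ({..<r * m} - color_block m i) - card D \<le> card ({..<r * m} - color_block m i - D)"
    using \<open>finite D\<close> by (rule diff_card_le_card_Diff)
  moreover have "2 * m \<le> (r - 1) * m"
    using \<open>3 \<le> r\<close> by (intro mult_le_mono1) simp
  moreover have "card ({..<r * m} - color_block m i) = (r - 1) * m"
    using \<open>i < r\<close> by (rule card_compl_color_block)
  ultimately have "m \<le> card ({..<r * m} - color_block m i - D)"
    using small by linarith
  then obtain S where S: "S \<subseteq> {..<r * m} - color_block m i - D" "card S = m"
    by (rule obtain_subset_with_card_n)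
  then have "(c, S) \<in> pointed_lists r m i"
    using c by (auto simp: pointed_lists_def)
  then show False
    using hit c S by blast
qed

lemma disjoint_family_card_le:
  assumes disj: "disjoint_family_on D {..<r}" and sub: "\<And>l. l < r \<Longrightarrow> D l \<subseteq> U"
    and "finite U" "card U \<le> r * m"
    and large: "\<And>l. l < r \<Longrightarrow> m \<le> card (D l)" and "i < r"
  shows "card (D i) \<le> m"
proof -
  have fin: "finite (D l)" if "l < r" for l
    using sub[OF that] \<open>finite U\<close> by (rule finite_subset)
  have "card (D i) + (r - 1) * m \<le> card (D i) + (\<Sum>l\<in>{..<r} - {i}. card (D l))"
    using sum_bounded_below[of "{..<r} - {i}" m "\<lambda>l. card (D l)"] large \<open>i < r\<close> by simp
  also have "card (D i) + (\<Sum>l\<in>{..<r} - {i}. card (D l)) = (\<Sum>l<r. card (D l))"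
    using \<open>i < r\<close> by (simp add: sum.remove)
  also have "\<dots> = card (\<Union>l<r. D l)"
    using disj fin by (intro card_UN_disjoint' [symmetric]) auto
  also have "\<dots> \<le> card U"
    using sub by (intro card_mono \<open>finite U\<close>) blast
  also have "\<dots> \<le> r * m"
    by fact
  finally show ?thesis
    using \<open>i < r\<close> by (cases r) auto
qed

lemma color_blocks_used:
  assumes "3 \<le> r" and disj: "disjoint_family_on D {..<r}"
    and sub: "\<And>l. l < r \<Longrightarrow> D l \<subseteq> {..<r * m}"
    and hit: "\<And>l c S. l < r \<Longrightarrow> (c, S) \<in> pointed_lists r m l \<Longrightarrow> insert c S \<inter> D l \<noteq> {}"
    and "i < r"
  shows "color_block m i \<subseteq> D i"
proof -
  have fin: "finite (D l)" if "l < r" for l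
    using sub[OF that] by (rule finite_subset) simp
  have alt: "color_block m l \<subseteq> D l \<or> m < card (D l)" if "l < r" for l
    using \<open>3 \<le> r\<close> that fin[OF that] hit[OF that] by (rule pointed_lists_hitting_set)
  have "m \<le> card (D l)" if "l < r" for l
    using alt[OF that] card_mono[OF fin[OF that], of "color_block m l"] by auto
  then have "card (D i) \<le> m"
    by (intro disjoint_family_card_le[OF disj sub _ _ _ \<open>i < r\<close>]) simp_all
  then show ?thesis
    using alt[OF \<open>i < r\<close>] by linarith
qed

lemma pointed_list_color_unique:
  assumes "0 < m" and disj: "disjoint_family_on D {..<r}"
    and blocks: "\<And>l. l < r \<Longrightarrow> color_block m l \<subseteq> D l"
    and "(c, S) \<in> pointed_lists r m i" "i < r" "x \<in> insert c S" "x \<in> D i"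
  shows "x = c"
proof (rule ccontr)
  assume "x \<noteq> c"
  then have x: "x < r * m" "x \<notin> color_block m i"
    using assms(4,6) by (auto simp: pointed_lists_def)
  define l where "l = x div m"
  have "l < r" "x \<in> color_block m l"
    using x \<open>0 < m\<close> by (simp_all add: l_def color_block_iff_div less_mult_imp_div_less)
  moreover have "l \<noteq> i"
    using x \<open>x \<in> color_block m l\<close> by auto
  ultimately have "D l \<inter> D i = {}" "x \<in> D l"
    using disj blocks \<open>i < r\<close> by (simp_all add: disjoint_family_onD subset_iff)
  then show False
    using \<open>x \<in> D i\<close> by blast
qed

lemma pointed_list_subset:
  assumes "(c, S) \<in> pointed_lists r m i" "i < r"
  shows "insert c S \<subseteq> {..<r * m}"
  using assms color_block_subset[OF \<open>i < r\<close>] by (auto simp: pointed_lists_def)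

lemma cmp_vertices_map: "cmp_vertices (map N [0..<r]) = {(i, j). i < r \<and> j < N i}"
  by (auto simp: cmp_vertices_def)

definition pointed_list_assignment :: "(nat \<Rightarrow> nat \<Rightarrow> nat \<times> nat set) \<Rightarrow> nat \<times> nat \<Rightarrow> nat set" where
  "pointed_list_assignment F = (\<lambda>(i, j). insert (fst (F i j)) (snd (F i j)))"

lemma pointed_list_assignment_coloring_unique:
  assumes "3 \<le> r" "0 < m"
    and F: "\<And>i. i < r \<Longrightarrow> F i ` {..<N i} = pointed_lists r m i"
    and col: "is_L_coloring (cmp_vertices (map N [0..<r])) cmp_edge (pointed_list_assignment F) c"
    and "i < r" "j < N i"
  shows "c (i, j) = fst (F i j)"
proof -
  define D where "D l = (\<lambda>h. c (l, h)) ` {..<N l}" for l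
  have in_list: "c (l, h) \<in> insert (fst (F l h)) (snd (F l h))" if "l < r" "h < N l" for l h
    using col that by (auto simp: is_L_coloring_def cmp_vertices_map pointed_list_assignment_def)
  have F_in: "F l h \<in> pointed_lists r m l" if "l < r" "h < N l" for l h
    using F that by blast
  have "c (l, h) \<noteq> c (l', h')"
    if "l < r" "l' < r" "h < N l" "h' < N l'" "l \<noteq> l'" for l l' h h'
    using col that unfolding is_L_coloring_def by (auto simp: cmp_vertices_map cmp_edge_def)
  then have disj: "disjoint_family_on D {..<r}"
    unfolding disjoint_family_on_def D_def by fastforce
  have "D l \<subseteq> {..<r * m}" if "l < r" for l
  proof
    fix x
    assume "x \<in> D l"
    then obtain h where "h < N l" "x = c (l, h)"
      by (auto simp: D_def)
    then show "x \<in> {..<r * m}"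
      using in_list[OF that] F_in[OF that] pointed_list_subset[OF _ that]
      by (metis prod.collapse subsetD)
  qed
  moreover have "insert c0 S \<inter> D l \<noteq> {}"
    if l: "l < r" and c0S: "(c0, S) \<in> pointed_lists r m l" for l c0 S
  proof -
    obtain h where h: "h < N l" "F l h = (c0, S)"
      using F[OF l] c0S by (metis imageE lessThan_iff)
    then have "c (l, h) \<in> insert c0 S \<inter> D l"
      using in_list[OF l] by (fastforce simp: D_def)
    then show ?thesis
      by blast
  qed
  ultimately have "color_block m l \<subseteq> D l" if "l < r" for l
    using \<open>3 \<le> r\<close> disj that by (intro color_blocks_used) auto
  moreover have "c (i, j) \<in> D i"
    using \<open>j < N i\<close> by (simp add: D_def)
  moreover have "(fst (F i j), snd (F i j)) \<in> pointed_lists r m i"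
    using F_in[OF \<open>i < r\<close> \<open>j < N i\<close>] by simp
  ultimately show ?thesis
    using pointed_list_color_unique[OF \<open>0 < m\<close> disj] in_list \<open>i < r\<close> \<open>j < N i\<close>
    by blast
qed

lemma pointed_list_assignment_uniquely_colorable:
  assumes "3 \<le> r" "0 < m"
    and F: "\<And>i. i < r \<Longrightarrow> F i ` {..<N i} = pointed_lists r m i"
  shows "uniquely_k_list_colorable (cmp_vertices (map N [0..<r])) cmp_edge (Suc m)"
proof -
  define V where "V = cmp_vertices (map N [0..<r])"
  define L where "L = pointed_list_assignment F"
  define c where "c = (\<lambda>(i, j). fst (F i j))"
  have F_in: "(fst (F i j), snd (F i j)) \<in> pointed_lists r m i" if "(i, j) \<in> V" for i j
    using F that by (auto simp: V_def cmp_vertices_map)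
  have "card (L (i, j)) = Suc m" if "(i, j) \<in> V" for i j
    using card_pointed_list[OF F_in[OF that]] by (simp add: L_def pointed_list_assignment_def)
  then have "is_k_list_assignment V (Suc m) L"
    unfolding is_k_list_assignment_def by (metis card_ge_0_finite zero_less_Suc surj_pair)
  moreover have "fst (F i j) \<noteq> fst (F l h)" if "(i, j) \<in> V" "(l, h) \<in> V" "i \<noteq> l" for i j l h
  proof -
    have "fst (F i j) \<in> color_block m i" "fst (F l h) \<in> color_block m l"
      using F_in[OF that(1)] F_in[OF that(2)] by (simp_all add: pointed_lists_def mem_Times_iff)
    moreover have "color_block m i \<inter> color_block m l = {}"
      using \<open>i \<noteq> l\<close> by (intro disjoint_family_onD[OF disjoint_family_color_block]) simp_all
    ultimately show ?thesis
      by (metis disjoint_iff)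
  qed
  then have "is_L_coloring V cmp_edge L c"
    by (auto simp: is_L_coloring_def L_def c_def pointed_list_assignment_def cmp_edge_def)
  moreover have "\<forall>v\<in>V. c' v = c v" if "is_L_coloring V cmp_edge L c'" for c'
    using pointed_list_assignment_coloring_unique[OF assms that[unfolded V_def L_def]]
    by (auto simp: V_def c_def cmp_vertices_map)
  ultimately show ?thesis
    unfolding uniquely_k_list_colorable_def V_def by blast
qed

lemma complete_multipartite_uniquely_list_colorable:
  assumes "3 \<le> r" "2 \<le> k"
  shows "\<exists>N. (\<forall>i<r. 1 \<le> N i) \<and> uniquely_k_list_colorable (cmp_vertices (map N [0..<r])) cmp_edge k"
proof -
  define m where "m = k - 1"
  have "0 < m" "k = Suc m"
    using assms by (auto simp: m_def)
  define N where "N i = card (pointed_lists r m i)" for i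
  have "\<forall>i. \<exists>f. f ` {..<N i} = pointed_lists r m i"
    using ex_bij_betw_nat_finite[OF finite_pointed_lists]
    by (metis N_def atLeast0LessThan bij_betw_imp_surj_on)
  then obtain F where "\<And>i. F i ` {..<N i} = pointed_lists r m i"
    by metis
  then have "uniquely_k_list_colorable (cmp_vertices (map N [0..<r])) cmp_edge k"
    using pointed_list_assignment_uniquely_colorable[OF \<open>3 \<le> r\<close> \<open>0 < m\<close>] \<open>k = Suc m\<close>
    by blast
  moreover have "1 \<le> N i" if "i < r" for i
    using pointed_lists_nonempty[OF \<open>0 < m\<close> _ that] \<open>3 \<le> r\<close> finite_pointed_lists
    by (simp add: N_def Suc_le_eq card_gt_0_iff)
  ultimately show ?thesis
    by blast
qed

theorem theorem3p1:
  fixes k :: nat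
  assumes "k \<ge> 2"
  shows "\<exists>n1 n2 n3 :: nat. n1 \<ge> 1 \<and> n2 \<ge> 1 \<and> n3 \<ge> 1 \<and>
           uniquely_k_list_colorable (cmp_vertices [n1, n2, n3]) cmp_edge k"
proof -
  obtain N where N: "\<forall>i<3. 1 \<le> N i"
    and "uniquely_k_list_colorable (cmp_vertices (map N [0..<3])) cmp_edge k"
    using complete_multipartite_uniquely_list_colorable[OF order_refl assms] by blast
  moreover have "map N [0..<3] = [N 0, N 1, N 2]"
    by (simp add: numeral_2_eq_2 numeral_3_eq_3)
  ultimately have "uniquely_k_list_colorable (cmp_vertices [N 0, N 1, N 2]) cmp_edge k"
    by simp
  moreover have "1 \<le> N 0" "1 \<le> N 1" "1 \<le> N 2"
    using N by simp_all
  ultimately show ?thesis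
    by blast
qed

end
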